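(* Suppose $A_\star\in\mathbb R^{n\times n}$ has a Jordan block with eigenvalue of modulus $|\lambda|=1$ and size $k$, and that $(A_\star,B_\star,C_\star,D_\star)$ is minimal. Then there exists a constant $\mathsf C>0$ depending on $A_\star,B_\star,C_\star$, $n$ and $k$ such that for all $N\ge\max\{20n^2,2k\}$, \[ \sqrt{\Big\|\sum_{t=0}^N\mathscr G_t\Big\|_{\mathrm{op}}}\ge\mathsf C N^k,\qquad\mathscr G_t:=\sum_{s=0}^tC_\star A_\star^{t-s}B_\star B_\star^\top(A_\star^{t-s})^\top C_\star^\top. \]
   Context: Minimality means $\mathrm{rank}[B_\star,A_\star B_\star,\dots,A_\star^{n-1}B_\star]=n$ and $\mathrm{rank}[C_\star^\top,(C_\star A_\star)^\top,\dots,(C_\star A_\star^{n-1})^\top]=n$. *)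

theory Defs
  imports "Jordan_Normal_Form.Jordan_Normal_Form" "Jordan_Normal_Form.DL_Rank"
begin

definition vnorm2 :: "real vec \<Rightarrow> real" where
  "vnorm2 x = sqrt (\<Sum>i<dim_vec x. (x $ i)^2)"

definition op_norm :: "real mat \<Rightarrow> real" where
  "op_norm M = Sup {vnorm2 (M *\<^sub>v x) | x. x \<in> carrier_vec (dim_col M) \<and> vnorm2 x \<le> 1}"

definition mat_sum :: "nat \<Rightarrow> nat \<Rightarrow> ('i \<Rightarrow> real mat) \<Rightarrow> 'i set \<Rightarrow> real mat" where
  "mat_sum r c f I = mat r c (\<lambda>ij. \<Sum>i\<in>I. f i $$ ij)"

definition ctrb_mat :: "nat \<Rightarrow> real mat \<Rightarrow> real mat \<Rightarrow> real mat" where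
  "ctrb_mat n A B = mat_of_cols n (concat (map (\<lambda>i. cols (A ^\<^sub>m i * B)) [0..<n]))"

definition obsv_mat :: "nat \<Rightarrow> real mat \<Rightarrow> real mat \<Rightarrow> real mat" where
  "obsv_mat n A C = mat_of_cols n (concat (map (\<lambda>i. cols (transpose_mat (C * A ^\<^sub>m i))) [0..<n]))"

definition G_mat :: "real mat \<Rightarrow> real mat \<Rightarrow> real mat \<Rightarrow> nat \<Rightarrow> real mat" where
  "G_mat A B C t = mat_sum (dim_row C) (dim_row C)
     (\<lambda>s. C * A ^\<^sub>m (t - s) * B * transpose_mat B * transpose_mat (A ^\<^sub>m (t - s)) * transpose_mat C)
     {0..t}"

end

theory Submission
  imports Defs
begin

text \<open>Minimality makes every entry of A^j a fixed linear combination of entries of the Markov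
  parameters C A^i B with j <= i <= j + 2n, because each unit vector is a combination of rows of
  the C A^i and of columns of the A^i B with i < n. In Jordan form the corner entry of the k-block
  of A^j has modulus binom(j, k - 1), so binom(j, k - 1)^2 is bounded by a constant times the
  window energy of the Markov parameters C A^(j+s) B, s <= 2n. The trace of the sum of G_t over
  t <= N is the double sum of the squared Frobenius norms of C A^i B over i <= t <= N, which the
  window bounds make of order N^(2k); finally the trace of a p x p matrix is at most p times its
  operator norm.\<close>

lemma pow_mat_add:
  assumes "A \<in> carrier_mat n n"
  shows "A ^\<^sub>m (i + j) = A ^\<^sub>m i * A ^\<^sub>m j"
proof (induct j)
  case (Suc j)
  have "A ^\<^sub>m (i + Suc j) = (A ^\<^sub>m i * A ^\<^sub>m j) * A" using Suc by simp
  also have "\<dots> = A ^\<^sub>m i * (A ^\<^sub>m j * A)"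
    using assms by (simp add: assoc_mult_mat[of _ n n _ n _ n])
  finally show ?case by simp
qed (use assms in simp)

lemma sum_bilinear_expand:
  fixes \<alpha> \<beta> :: "_ \<Rightarrow> 'a::comm_semiring_0"
  shows "(\<Sum>x\<in>X. \<Sum>y\<in>Y. (\<Sum>r\<in>R. \<alpha> r * f r x) * g x y * (\<Sum>u\<in>U. \<beta> u * h u y))
       = (\<Sum>r\<in>R. \<Sum>u\<in>U. \<alpha> r * \<beta> u * (\<Sum>x\<in>X. \<Sum>y\<in>Y. f r x * g x y * h u y))"
proof -
  have "(\<Sum>x\<in>X. \<Sum>y\<in>Y. (\<Sum>r\<in>R. \<alpha> r * f r x) * g x y * (\<Sum>u\<in>U. \<beta> u * h u y))
      = (\<Sum>x\<in>X. \<Sum>y\<in>Y. \<Sum>r\<in>R. \<Sum>u\<in>U. \<alpha> r * \<beta> u * (f r x * g x y * h u y))"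
    by (simp add: sum_distrib_left sum_distrib_right mult_ac)
  also have "\<dots> = (\<Sum>r\<in>R. \<Sum>u\<in>U. \<Sum>x\<in>X. \<Sum>y\<in>Y. \<alpha> r * \<beta> u * (f r x * g x y * h u y))"
    by (subst sum.swap, subst (2) sum.swap, rule sum.cong[OF refl], subst sum.swap,
        rule sum.cong[OF refl], subst sum.swap, simp)
  finally show ?thesis by (simp add: sum_distrib_left)
qed

lemma finite_uniform_scale_bound:
  fixes f :: "'a \<Rightarrow> 'b \<Rightarrow> real"
  assumes "finite S" and g: "\<And>j. g j \<ge> 0"
    and "\<And>s. s \<in> S \<Longrightarrow> \<exists>c\<ge>0. \<forall>j. f s j \<le> c * g j"
  shows "\<exists>c\<ge>0. \<forall>s\<in>S. \<forall>j. f s j \<le> c * g j"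
  using assms(1,3)
proof (induction rule: finite_induct)
  case (insert s S)
  obtain c1 where c1: "c1 \<ge> 0" "\<And>j. f s j \<le> c1 * g j" using insert.prems by blast
  obtain c2 where c2: "c2 \<ge> 0" "\<forall>t\<in>S. \<forall>j. f t j \<le> c2 * g j" using insert by blast
  have "f t j \<le> (c1 + c2) * g j" if "t \<in> insert s S" for t j
  proof -
    have "0 \<le> c1 * g j" "0 \<le> c2 * g j" using c1 c2 g by simp_all
    moreover have "f t j \<le> c1 * g j \<or> f t j \<le> c2 * g j" using that c1(2)[of j] c2(2) by auto
    ultimately show ?thesis unfolding distrib_right by linarith
  qed
  with c1 c2 show ?case by (intro exI[of _ "c1 + c2"]) auto
qed auto

lemma mat_of_cols_concat_index:
  assumes "r < length (concat (map f xs))"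
  shows "\<exists>i \<in> set xs. \<exists>w \<in> set (f i). \<forall>x<n. mat_of_cols n (concat (map f xs)) $$ (x, r) = w $ x"
proof -
  obtain i where "i \<in> set xs" "concat (map f xs) ! r \<in> set (f i)"
    using nth_mem[OF assms] unfolding set_concat set_map by blast
  then show ?thesis using assms by (auto simp: mat_of_cols_index)
qed

lemma obsv_mat_index:
  assumes "r < dim_col (obsv_mat n A C)" and "A \<in> carrier_mat n n"
  shows "\<exists>i<n. \<exists>q<dim_row C. \<forall>x<n. obsv_mat n A C $$ (x, r) = (C * A ^\<^sub>m i) $$ (q, x)"
proof -
  from mat_of_cols_concat_index[of r "\<lambda>i. cols (transpose_mat (C * A ^\<^sub>m i))" "[0..<n]" n] assms(1)
  obtain i w where i: "i < n" and w: "w \<in> set (cols (transpose_mat (C * A ^\<^sub>m i)))"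
    and obsv: "\<forall>x<n. obsv_mat n A C $$ (x, r) = w $ x"
    unfolding obsv_mat_def by auto
  from w obtain q where q: "q < dim_row C" and "w = row (C * A ^\<^sub>m i) q"
    by (auto simp: in_set_conv_nth)
  with obsv assms(2) have "\<forall>x<n. obsv_mat n A C $$ (x, r) = (C * A ^\<^sub>m i) $$ (q, x)" by simp
  with i q show ?thesis by blast
qed

lemma ctrb_mat_index:
  assumes "r < dim_col (ctrb_mat n A B)" and "A \<in> carrier_mat n n"
  shows "\<exists>i<n. \<exists>l<dim_col B. \<forall>y<n. ctrb_mat n A B $$ (y, r) = (A ^\<^sub>m i * B) $$ (y, l)"
proof -
  from mat_of_cols_concat_index[of r "\<lambda>i. cols (A ^\<^sub>m i * B)" "[0..<n]" n] assms(1)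
  obtain i w where i: "i < n" and w: "w \<in> set (cols (A ^\<^sub>m i * B))"
    and ctrb: "\<forall>y<n. ctrb_mat n A B $$ (y, r) = w $ y"
    unfolding ctrb_mat_def by auto
  from w obtain l where l: "l < dim_col B" and "w = col (A ^\<^sub>m i * B) l"
    by (auto simp: in_set_conv_nth)
  with ctrb assms(2) have "\<forall>y<n. ctrb_mat n A B $$ (y, r) = (A ^\<^sub>m i * B) $$ (y, l)" by simp
  with i l show ?thesis by blast
qed

lemma full_rank_mult_vec_surj:
  fixes M :: "'a::field mat"
  assumes M: "M \<in> carrier_mat n nc" and r: "vec_space.rank n M = n" and v: "v \<in> carrier_vec n"
  shows "\<exists>c. v = M *\<^sub>v vec nc c"
proof -
  interpret vs: vec_space "TYPE('a)" n .
  have colsC: "set (cols M) \<subseteq> carrier_vec n" using M cols_dim by blast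
  obtain S where S: "maximal S (\<lambda>T. T \<subseteq> set (cols M) \<and> vs.lin_indpt T)"
    using maximal_exists[of "\<lambda>T. T \<subseteq> set (cols M) \<and> vs.lin_indpt T" "card (set (cols M))" "{}"]
    by (meson List.finite_set card_mono empty_iff empty_subsetI vs.finite_lin_indpt2 rev_finite_subset)
  have Ssub: "S \<subseteq> set (cols M)" "vs.lin_indpt S" using S unfolding maximal_def by auto
  have "card S = n" using vs.rank_card_indpt[OF M S] r by simp
  then have "vs.basis S"
    using Ssub colsC by (intro vs.dim_li_is_basis) (auto intro: finite_subset simp: vs.dim_is_n)
  then have "v \<in> vs.span (set (cols M))"
    using vs.span_is_monotone[OF Ssub(1)] v unfolding vs.basis_def by auto
  then obtain c where "v = vs.lincomb_list c (cols M)"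
    using vs.span_list_as_span[OF colsC] by (metis vs.in_span_listE)
  also have "\<dots> = mat_of_cols n (cols M) *\<^sub>v vec (length (cols M)) c"
    using colsC by (intro vs.lincomb_list_as_mat_mult) auto
  also have "\<dots> = M *\<^sub>v vec nc c" using M mat_of_cols_cols[of M] by simp
  finally show ?thesis by blast
qed

definition markov_param :: "real mat \<Rightarrow> real mat \<Rightarrow> real mat \<Rightarrow> nat \<Rightarrow> real mat" where
  "markov_param A B C j = C * A ^\<^sub>m j * B"

definition frobenius_sq :: "real mat \<Rightarrow> real" where
  "frobenius_sq M = (\<Sum>i<dim_row M. \<Sum>l<dim_col M. (M $$ (i, l))^2)"

definition markov_window :: "nat \<Rightarrow> real mat \<Rightarrow> real mat \<Rightarrow> real mat \<Rightarrow> nat \<Rightarrow> real" where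
  "markov_window n A B C j = (\<Sum>s\<le>2 * n. frobenius_sq (markov_param A B C (j + s)))"

lemma frobenius_sq_nonneg: "frobenius_sq M \<ge> 0"
  unfolding frobenius_sq_def by (intro sum_nonneg) simp

lemma markov_window_nonneg: "markov_window n A B C j \<ge> 0"
  unfolding markov_window_def by (intro sum_nonneg frobenius_sq_nonneg)

lemma sq_index_le_frobenius_sq:
  assumes "i < dim_row M" "l < dim_col M"
  shows "(M $$ (i, l))^2 \<le> frobenius_sq M"
proof -
  have "(M $$ (i, l))^2 \<le> (\<Sum>l<dim_col M. (M $$ (i, l))^2)"
    using assms by (intro member_le_sum) auto
  also have "\<dots> \<le> frobenius_sq M"
    unfolding frobenius_sq_def using assms
    by (intro member_le_sum[of _ _ "\<lambda>i. \<Sum>l<dim_col M. (M $$ (i, l))^2"] sum_nonneg) auto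
  finally show ?thesis .
qed

lemma abs_markov_param_le_window:
  assumes "q < dim_row C" "l < dim_col B" "s \<le> 2 * n"
  shows "\<bar>markov_param A B C (j + s) $$ (q, l)\<bar> \<le> sqrt (markov_window n A B C j)"
proof -
  have "(markov_param A B C (j + s) $$ (q, l))^2 \<le> frobenius_sq (markov_param A B C (j + s))"
    using assms by (intro sq_index_le_frobenius_sq) (simp_all add: markov_param_def)
  also have "\<dots> \<le> markov_window n A B C j"
    unfolding markov_window_def using assms(3)
    by (intro member_le_sum[of _ _ "\<lambda>s. frobenius_sq (markov_param A B C (j + s))"]
        frobenius_sq_nonneg) auto
  finally show ?thesis by (metis real_sqrt_abs real_sqrt_le_mono)
qed

lemma markov_param_index:
  assumes A: "A \<in> carrier_mat n n" and B: "B \<in> carrier_mat n m" and C: "C \<in> carrier_mat p n"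
    and q: "q < p" and l: "l < m"
  shows "(\<Sum>x<n. \<Sum>y<n. (C * A ^\<^sub>m i) $$ (q, x) * (A ^\<^sub>m j) $$ (x, y) * (A ^\<^sub>m i' * B) $$ (y, l))
       = markov_param A B C (i + j + i') $$ (q, l)"
proof -
  have carrier: "A ^\<^sub>m i \<in> carrier_mat n n" "A ^\<^sub>m j \<in> carrier_mat n n" "A ^\<^sub>m i' \<in> carrier_mat n n"
    using A by auto
  have "C * (A ^\<^sub>m i * A ^\<^sub>m j * A ^\<^sub>m i') * B = C * A ^\<^sub>m i * (A ^\<^sub>m j * (A ^\<^sub>m i' * B))"
    using carrier B C
    by (simp add: mult_carrier_mat assoc_mult_mat[of _ p n _ n _ m] assoc_mult_mat[of _ p n _ n _ n]
        assoc_mult_mat[of _ n n _ n _ n] assoc_mult_mat[of _ n n _ n _ m])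
  then have "markov_param A B C (i + j + i') = (C * A ^\<^sub>m i) * (A ^\<^sub>m j * (A ^\<^sub>m i' * B))"
    unfolding markov_param_def pow_mat_add[OF A] .
  also have "\<dots> $$ (q, l)
      = (\<Sum>x<n. (C * A ^\<^sub>m i) $$ (q, x) * (\<Sum>y<n. (A ^\<^sub>m j) $$ (x, y) * (A ^\<^sub>m i' * B) $$ (y, l)))"
    using A B C q l by (simp add: scalar_prod_def lessThan_atLeast0)
  finally show ?thesis by (simp add: sum_distrib_left mult.assoc)
qed

lemma unit_vec_obsv_combination:
  assumes A: "A \<in> carrier_mat n n" and C: "C \<in> carrier_mat p n"
    and obsv: "vec_space.rank n (obsv_mat n A C) = n" and a: "a < n"
  shows "\<exists>(N::nat) \<alpha> \<iota> \<kappa>. (\<forall>r<N. \<iota> r < n \<and> \<kappa> r < p) \<and>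
    (\<forall>x<n. (if x = a then 1 else 0) = (\<Sum>r<N. \<alpha> r * (C * A ^\<^sub>m \<iota> r) $$ (\<kappa> r, x)))"
proof -
  define N where "N = dim_col (obsv_mat n A C)"
  have O: "obsv_mat n A C \<in> carrier_mat n N" unfolding N_def by (simp add: obsv_mat_def)
  obtain \<alpha> where \<alpha>: "unit_vec n a = obsv_mat n A C *\<^sub>v vec N \<alpha>"
    using full_rank_mult_vec_surj[OF O obsv unit_vec_carrier] by blast
  have "\<forall>r. \<exists>i q. r < N \<longrightarrow>
      i < n \<and> q < p \<and> (\<forall>x<n. obsv_mat n A C $$ (x, r) = (C * A ^\<^sub>m i) $$ (q, x))"
    using obsv_mat_index[OF _ A, of _ C] C unfolding N_def by auto
  then obtain \<iota> \<kappa> where \<iota>\<kappa>: "\<And>r. r < N \<Longrightarrow>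
      \<iota> r < n \<and> \<kappa> r < p \<and> (\<forall>x<n. obsv_mat n A C $$ (x, r) = (C * A ^\<^sub>m \<iota> r) $$ (\<kappa> r, x))"
    by metis
  have "\<forall>x<n. (if x = a then 1 else 0) = (\<Sum>r<N. \<alpha> r * (C * A ^\<^sub>m \<iota> r) $$ (\<kappa> r, x))"
  proof (intro allI impI)
    fix x assume x: "x < n"
    have "(if x = a then 1 else 0) = (\<Sum>r<N. obsv_mat n A C $$ (x, r) * \<alpha> r)"
      using arg_cong[OF \<alpha>, of "\<lambda>v. v $ x"] x a O by (simp add: scalar_prod_def lessThan_atLeast0)
    also have "\<dots> = (\<Sum>r<N. \<alpha> r * (C * A ^\<^sub>m \<iota> r) $$ (\<kappa> r, x))"
      using \<iota>\<kappa> x by (intro sum.cong) auto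
    finally show "(if x = a then 1 else 0) = (\<Sum>r<N. \<alpha> r * (C * A ^\<^sub>m \<iota> r) $$ (\<kappa> r, x))" .
  qed
  moreover have "\<forall>r<N. \<iota> r < n \<and> \<kappa> r < p" using \<iota>\<kappa> by blast
  ultimately show ?thesis by blast
qed

lemma unit_vec_ctrb_combination:
  assumes A: "A \<in> carrier_mat n n" and B: "B \<in> carrier_mat n m"
    and ctrb: "vec_space.rank n (ctrb_mat n A B) = n" and b: "b < n"
  shows "\<exists>(N::nat) \<beta> \<iota> \<nu>. (\<forall>u<N. \<iota> u < n \<and> \<nu> u < m) \<and>
    (\<forall>y<n. (if y = b then 1 else 0) = (\<Sum>u<N. \<beta> u * (A ^\<^sub>m \<iota> u * B) $$ (y, \<nu> u)))"
proof -
  define N where "N = dim_col (ctrb_mat n A B)"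
  have R: "ctrb_mat n A B \<in> carrier_mat n N" unfolding N_def by (simp add: ctrb_mat_def)
  obtain \<beta> where \<beta>: "unit_vec n b = ctrb_mat n A B *\<^sub>v vec N \<beta>"
    using full_rank_mult_vec_surj[OF R ctrb unit_vec_carrier] by blast
  have "\<forall>u. \<exists>i l. u < N \<longrightarrow>
      i < n \<and> l < m \<and> (\<forall>y<n. ctrb_mat n A B $$ (y, u) = (A ^\<^sub>m i * B) $$ (y, l))"
    using ctrb_mat_index[OF _ A, of _ B] B unfolding N_def by auto
  then obtain \<iota> \<nu> where \<iota>\<nu>: "\<And>u. u < N \<Longrightarrow>
      \<iota> u < n \<and> \<nu> u < m \<and> (\<forall>y<n. ctrb_mat n A B $$ (y, u) = (A ^\<^sub>m \<iota> u * B) $$ (y, \<nu> u))"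
    by metis
  have "\<forall>y<n. (if y = b then 1 else 0) = (\<Sum>u<N. \<beta> u * (A ^\<^sub>m \<iota> u * B) $$ (y, \<nu> u))"
  proof (intro allI impI)
    fix y assume y: "y < n"
    have "(if y = b then 1 else 0) = (\<Sum>u<N. ctrb_mat n A B $$ (y, u) * \<beta> u)"
      using arg_cong[OF \<beta>, of "\<lambda>v. v $ y"] y b R by (simp add: scalar_prod_def lessThan_atLeast0)
    also have "\<dots> = (\<Sum>u<N. \<beta> u * (A ^\<^sub>m \<iota> u * B) $$ (y, \<nu> u))"
      using \<iota>\<nu> y by (intro sum.cong) auto
    finally show "(if y = b then 1 else 0) = (\<Sum>u<N. \<beta> u * (A ^\<^sub>m \<iota> u * B) $$ (y, \<nu> u))" .
  qed
  moreover have "\<forall>u<N. \<iota> u < n \<and> \<nu> u < m" using \<iota>\<nu> by blast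
  ultimately show ?thesis by blast
qed

lemma pow_mat_index_le_markov_window:
  assumes A: "A \<in> carrier_mat n n" and B: "B \<in> carrier_mat n m" and C: "C \<in> carrier_mat p n"
    and ctrb: "vec_space.rank n (ctrb_mat n A B) = n"
    and obsv: "vec_space.rank n (obsv_mat n A C) = n"
    and a: "a < n" and b: "b < n"
  shows "\<exists>c\<ge>0. \<forall>j. \<bar>(A ^\<^sub>m j) $$ (a, b)\<bar> \<le> c * sqrt (markov_window n A B C j)"
proof -
  obtain N :: nat and \<alpha> \<iota> \<kappa> where \<iota>\<kappa>: "\<And>r. r < N \<Longrightarrow> \<iota> r < n \<and> \<kappa> r < p"
    and ea: "\<And>x. x < n \<Longrightarrow> (if x = a then 1 else 0) = (\<Sum>r<N. \<alpha> r * (C * A ^\<^sub>m \<iota> r) $$ (\<kappa> r, x))"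
    using unit_vec_obsv_combination[OF A C obsv a] by blast
  obtain M :: nat and \<beta> \<iota>' \<nu> where \<iota>\<nu>: "\<And>u. u < M \<Longrightarrow> \<iota>' u < n \<and> \<nu> u < m"
    and eb: "\<And>y. y < n \<Longrightarrow> (if y = b then 1 else 0) = (\<Sum>u<M. \<beta> u * (A ^\<^sub>m \<iota>' u * B) $$ (y, \<nu> u))"
    using unit_vec_ctrb_combination[OF A B ctrb b] by blast
  have "\<bar>(A ^\<^sub>m j) $$ (a, b)\<bar> \<le> (\<Sum>r<N. \<Sum>u<M. \<bar>\<alpha> r\<bar> * \<bar>\<beta> u\<bar>) * sqrt (markov_window n A B C j)"
    for j
  proof -
    let ?F = "\<lambda>r u. markov_param A B C (\<iota> r + j + \<iota>' u) $$ (\<kappa> r, \<nu> u)"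
    have "(A ^\<^sub>m j) $$ (a, b)
        = (\<Sum>x<n. \<Sum>y<n. (if x = a then 1 else 0) * (A ^\<^sub>m j) $$ (x, y) * (if y = b then 1 else 0))"
      using a b by (simp add: if_distrib[of "\<lambda>c. c * _"] if_distrib[of "\<lambda>c. _ * c"] sum.If_cases
          cong: if_cong)
    also have "\<dots> = (\<Sum>x<n. \<Sum>y<n. (\<Sum>r<N. \<alpha> r * (C * A ^\<^sub>m \<iota> r) $$ (\<kappa> r, x)) * (A ^\<^sub>m j) $$ (x, y)
        * (\<Sum>u<M. \<beta> u * (A ^\<^sub>m \<iota>' u * B) $$ (y, \<nu> u)))"
      using ea eb by (intro sum.cong refl) simp
    also have "\<dots> = (\<Sum>r<N. \<Sum>u<M. \<alpha> r * \<beta> u * (\<Sum>x<n. \<Sum>y<n.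
        (C * A ^\<^sub>m \<iota> r) $$ (\<kappa> r, x) * (A ^\<^sub>m j) $$ (x, y) * (A ^\<^sub>m \<iota>' u * B) $$ (y, \<nu> u)))"
      by (rule sum_bilinear_expand)
    also have "\<dots> = (\<Sum>r<N. \<Sum>u<M. \<alpha> r * \<beta> u * ?F r u)"
      using \<iota>\<kappa> \<iota>\<nu> by (intro sum.cong refl) (simp add: markov_param_index[OF A B C])
    finally have "\<bar>(A ^\<^sub>m j) $$ (a, b)\<bar> \<le> (\<Sum>r<N. \<Sum>u<M. \<bar>\<alpha> r * \<beta> u * ?F r u\<bar>)"
      by (simp only:) (rule order_trans[OF sum_abs], rule sum_mono, rule sum_abs)
    also have "\<dots> \<le> (\<Sum>r<N. \<Sum>u<M. \<bar>\<alpha> r\<bar> * \<bar>\<beta> u\<bar> * sqrt (markov_window n A B C j))"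
    proof (intro sum_mono)
      fix r u assume "r \<in> {..<N}" "u \<in> {..<M}"
      then have "\<bar>markov_param A B C (j + (\<iota> r + \<iota>' u)) $$ (\<kappa> r, \<nu> u)\<bar>
          \<le> sqrt (markov_window n A B C j)"
        using \<iota>\<kappa>[of r] \<iota>\<nu>[of u] B C by (intro abs_markov_param_le_window) auto
      then have "\<bar>?F r u\<bar> \<le> sqrt (markov_window n A B C j)" by (simp add: add_ac)
      then show "\<bar>\<alpha> r * \<beta> u * ?F r u\<bar> \<le> \<bar>\<alpha> r\<bar> * \<bar>\<beta> u\<bar> * sqrt (markov_window n A B C j)"
        unfolding abs_mult by (intro mult_left_mono) auto
    qed
    finally show ?thesis by (simp add: sum_distrib_right)
  qed
  then show ?thesis by (intro exI[of _ "\<Sum>r<N. \<Sum>u<M. \<bar>\<alpha> r\<bar> * \<bar>\<beta> u\<bar>"]) (simp add: sum_nonneg)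
qed

lemma pow_mat_indices_le_markov_window:
  assumes A: "A \<in> carrier_mat n n" and B: "B \<in> carrier_mat n m" and C: "C \<in> carrier_mat p n"
    and ctrb: "vec_space.rank n (ctrb_mat n A B) = n"
    and obsv: "vec_space.rank n (obsv_mat n A C) = n"
  shows "\<exists>c\<ge>0. \<forall>j a b. a < n \<longrightarrow> b < n \<longrightarrow> \<bar>(A ^\<^sub>m j) $$ (a, b)\<bar> \<le> c * sqrt (markov_window n A B C j)"
proof -
  have "\<exists>c\<ge>0. \<forall>ab\<in>{..<n} \<times> {..<n}. \<forall>j. \<bar>(A ^\<^sub>m j) $$ ab\<bar> \<le> c * sqrt (markov_window n A B C j)"
    using pow_mat_index_le_markov_window[OF A B C ctrb obsv]
    by (intro finite_uniform_scale_bound) (auto simp: markov_window_nonneg)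
  then show ?thesis by auto
qed

lemma diag_block_mat_index:
  assumes "i < dim_row M" "j < dim_col M"
  shows "diag_block_mat (Ms @ M # Ms') $$ (sum_list (map dim_row Ms) + i, sum_list (map dim_col Ms) + j)
    = M $$ (i, j)"
  using assms by (induct Ms) (auto simp: Let_def dim_diag_block_mat)

lemma jordan_matrix_pow_block_corner:
  fixes \<mu> :: "'a :: comm_ring_1"
  assumes "(k, \<mu>) \<in> set n_as" "0 < k"
  shows "\<exists>r s. r < sum_list (map fst n_as) \<and> s < sum_list (map fst n_as) \<and>
    (\<forall>j. (jordan_matrix n_as ^\<^sub>m j) $$ (r, s) = of_nat (j choose (k - 1)) * \<mu> ^ (j - (k - 1)))"
proof -
  obtain xs ys where n_as: "n_as = xs @ (k, \<mu>) # ys" using split_list[OF assms(1)] by blast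
  define o1 where "o1 = sum_list (map fst xs)"
  let ?pow = "\<lambda>j. map (\<lambda>(n, a). jordan_block n a ^\<^sub>m j)"
  have dims: "sum_list (map dim_row (?pow j xs)) = o1" "sum_list (map dim_col (?pow j xs)) = o1" for j
    unfolding o1_def by (induct xs) auto
  have "(jordan_matrix n_as ^\<^sub>m j) $$ (o1 + 0, o1 + (k - 1))
      = of_nat (j choose (k - 1)) * \<mu> ^ (j - (k - 1))" for j
  proof -
    have "(jordan_matrix n_as ^\<^sub>m j) $$ (o1 + 0, o1 + (k - 1)) = (jordan_block k \<mu> ^\<^sub>m j) $$ (0, k - 1)"
      using diag_block_mat_index[of 0 "jordan_block k \<mu> ^\<^sub>m j" "k - 1" "?pow j xs" "?pow j ys"] assms(2)
      unfolding jordan_matrix_pow n_as dims by simp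
    also have "\<dots> = of_nat (j choose (k - 1)) * \<mu> ^ (j - (k - 1))"
      unfolding jordan_block_pow using assms(2) by simp
    finally show ?thesis .
  qed
  moreover have "o1 + (k - 1) < sum_list (map fst n_as)" "o1 + 0 < sum_list (map fst n_as)"
    unfolding n_as o1_def using assms(2) by auto
  ultimately show ?thesis by blast
qed

lemma jordan_nf_dim:
  assumes "jordan_nf A n_as" "A \<in> carrier_mat n n"
  shows "sum_list (map fst n_as) = n"
proof -
  from assms(1)[unfolded jordan_nf_def similar_mat_def]
  obtain P Q where "similar_mat_wit A (jordan_matrix n_as) P Q" by iprover
  from carrier_matD(1)[OF similar_mat_witD2(5)[OF assms(2) this]] show ?thesis by simp
qed

lemma jordan_nf_block_size:
  assumes "jordan_nf A n_as" "A \<in> carrier_mat n n" "(k, \<mu>) \<in> set n_as"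
  shows "0 < k" "k \<le> n"
proof -
  show "0 < k" using assms(1,3) unfolding jordan_nf_def by force
  have "k \<le> sum_list (map fst n_as)" using assms(3) by (intro member_le_sum_list; force)
  then show "k \<le> n" using jordan_nf_dim[OF assms(1,2)] by simp
qed
lemma norm_mult_mat_index_le:
  fixes Q M P :: "'a::real_normed_field mat"
  assumes "Q \<in> carrier_mat n n" "M \<in> carrier_mat n n" "P \<in> carrier_mat n n" "r < n" "s < n"
    and bound: "\<And>x y. x < n \<Longrightarrow> y < n \<Longrightarrow> norm (M $$ (x, y)) \<le> b"
  shows "norm ((Q * M * P) $$ (r, s)) \<le> (\<Sum>x<n. \<Sum>y<n. norm (Q $$ (r, x)) * norm (P $$ (y, s))) * b"
proof -
  have "(Q * M * P) $$ (r, s) = (\<Sum>x<n. \<Sum>y<n. Q $$ (r, x) * M $$ (x, y) * P $$ (y, s))"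
    using assms by (simp add: scalar_prod_def lessThan_atLeast0 sum_distrib_left mult.assoc)
  then have "norm ((Q * M * P) $$ (r, s))
      \<le> (\<Sum>x<n. \<Sum>y<n. norm (Q $$ (r, x)) * norm (M $$ (x, y)) * norm (P $$ (y, s)))"
    by (simp only:) (rule order_trans[OF norm_sum], rule sum_mono,
        rule order_trans[OF norm_sum], simp add: norm_mult)
  also have "\<dots> \<le> (\<Sum>x<n. \<Sum>y<n. norm (Q $$ (r, x)) * b * norm (P $$ (y, s)))"
    by (intro sum_mono mult_right_mono mult_left_mono bound) auto
  finally show ?thesis by (simp add: sum_distrib_left sum_distrib_right mult_ac)
qed

lemma binomial_le_markov_window:
  fixes n_as :: "(nat \<times> complex) list"
  assumes A: "A \<in> carrier_mat n n" and B: "B \<in> carrier_mat n m" and C: "C \<in> carrier_mat p n"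
    and jnf: "jordan_nf (map_mat complex_of_real A) n_as"
    and blk: "(k, \<mu>) \<in> set n_as" and lam: "cmod \<mu> = 1"
    and ctrb: "vec_space.rank n (ctrb_mat n A B) = n"
    and obsv: "vec_space.rank n (obsv_mat n A C) = n"
  shows "\<exists>c>0. \<forall>j. real (j choose (k - 1)) \<le> c * sqrt (markov_window n A B C j)"
proof -
  let ?W = "\<lambda>j. sqrt (markov_window n A B C j)"
  have Ac: "map_mat complex_of_real A \<in> carrier_mat n n" using A by simp
  obtain c where c0: "c \<ge> 0"
    and c: "\<And>j a b. a < n \<Longrightarrow> b < n \<Longrightarrow> \<bar>(A ^\<^sub>m j) $$ (a, b)\<bar> \<le> c * ?W j"
    using pow_mat_indices_le_markov_window[OF A B C ctrb obsv] by blast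
  from jnf[unfolded jordan_nf_def similar_mat_def]
  obtain P Q where wit: "similar_mat_wit (map_mat complex_of_real A) (jordan_matrix n_as) P Q"
    by blast
  have PQ: "P \<in> carrier_mat n n" "Q \<in> carrier_mat n n"
    using similar_mat_witD2[OF Ac wit] by auto
  have J_pow: "jordan_matrix n_as ^\<^sub>m j = Q * map_mat complex_of_real (A ^\<^sub>m j) * P" for j
    unfolding of_real_hom.mat_hom_pow[OF A] by (rule similar_mat_wit_pow_id[OF similar_mat_wit_sym[OF wit]])
  from jordan_matrix_pow_block_corner[OF blk jordan_nf_block_size(1)[OF jnf Ac blk]]
  obtain r s where rs: "r < sum_list (map fst n_as)" "s < sum_list (map fst n_as)"
    and J_rs: "\<forall>j. (jordan_matrix n_as ^\<^sub>m j) $$ (r, s) = of_nat (j choose (k - 1)) * \<mu> ^ (j - (k - 1))"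
    by iprover
  note rs = rs[unfolded jordan_nf_dim[OF jnf Ac]]
  define d where "d = (\<Sum>x<n. \<Sum>y<n. cmod (Q $$ (r, x)) * cmod (P $$ (y, s)))"
  have "real (j choose (k - 1)) \<le> (d * c + 1) * ?W j" for j
  proof -
    have "real (j choose (k - 1)) = cmod ((jordan_matrix n_as ^\<^sub>m j) $$ (r, s))"
      by (simp add: J_rs norm_mult norm_power lam)
    also have "\<dots> \<le> d * (c * ?W j)"
      unfolding J_pow d_def using PQ A rs c by (intro norm_mult_mat_index_le) auto
    also have "\<dots> \<le> (d * c + 1) * ?W j" by (simp add: algebra_simps markov_window_nonneg)
    finally show ?thesis .
  qed
  moreover have "d * c + 1 > 0"
    unfolding d_def using c0 by (intro add_nonneg_pos mult_nonneg_nonneg sum_nonneg) auto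
  ultimately show ?thesis by blast
qed

lemma binomial_ge_pow_ratio:
  assumes "k \<ge> 1" "2 * k \<le> N" "N \<le> 2 * j"
  shows "(real N / (2 * real k)) ^ (k - 1) \<le> real (j choose (k - 1))"
proof -
  have "(real N / (2 * real k)) ^ (k - 1) \<le> (real j / real (k - 1)) ^ (k - 1)"
  proof (cases "k = 1")
    case False
    have "real N / (2 * real k) \<le> real j / real k" using assms by (simp add: divide_simps)
    also have "\<dots> \<le> real j / real (k - 1)" using False assms(1) by (intro divide_left_mono) auto
    finally show ?thesis by (intro power_mono) auto
  qed simp
  also have "\<dots> \<le> real (j choose (k - 1))"
    using assms by (intro binomial_ge_n_over_k_pow_k) linarith
  finally show ?thesis .
qed

lemma binomial_pow_le_window:
  fixes g :: "nat \<Rightarrow> real"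
  assumes g: "\<And>i. g i \<ge> 0" and k: "k \<ge> 1"
    and window: "\<And>j. real (j choose (k - 1)) \<le> c * sqrt (\<Sum>s\<le>h. g (j + s))"
    and "2 * k \<le> N" "N \<le> 2 * j"
  shows "(real N / (2 * real k)) ^ (2 * k - 2) \<le> c\<^sup>2 * (\<Sum>s\<le>h. g (j + s))"
proof -
  have "(real N / (2 * real k)) ^ (k - 1) \<le> c * sqrt (\<Sum>s\<le>h. g (j + s))"
    using order_trans[OF binomial_ge_pow_ratio[OF k assms(4,5)] window] .
  then have "((real N / (2 * real k)) ^ (k - 1))\<^sup>2 \<le> (c * sqrt (\<Sum>s\<le>h. g (j + s)))\<^sup>2"
    by (intro power_mono) auto
  moreover have "((real N / (2 * real k)) ^ (k - 1))\<^sup>2 = (real N / (2 * real k)) ^ (2 * k - 2)"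
    by (simp add: power_mult[symmetric] mult.commute right_diff_distrib')
  ultimately show ?thesis using g by (simp add: power_mult_distrib sum_nonneg)
qed

text \<open>Each window starting in [a, t - h] lies inside [0, t], and each index is covered by at
  most h + 1 of them.\<close>

lemma card_mult_le_window_sum:
  fixes g :: "nat \<Rightarrow> real"
  assumes g: "\<And>i. g i \<ge> 0" and window: "\<And>j. a \<le> j \<Longrightarrow> L \<le> (\<Sum>s\<le>h. g (j + s))"
    and "a + h \<le> t"
  shows "real (card {a..t - h}) * L \<le> real (h + 1) * (\<Sum>i\<le>t. g i)"
proof -
  have "real (card {a..t - h}) * L = (\<Sum>j\<in>{a..t - h}. L)" by simp
  also have "\<dots> \<le> (\<Sum>j\<in>{a..t - h}. \<Sum>s\<le>h. g (j + s))" using window by (intro sum_mono) auto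
  also have "\<dots> = (\<Sum>s\<le>h. \<Sum>j\<in>{a..t - h}. g (j + s))" by (rule sum.swap)
  also have "\<dots> \<le> (\<Sum>s\<le>h. \<Sum>i\<le>t. g i)"
  proof (rule sum_mono)
    fix s assume "s \<in> {..h}"
    then have "(\<lambda>j. j + s) ` {a..t - h} \<subseteq> {..t}" using assms(3) by auto
    then have "(\<Sum>i\<in>(\<lambda>j. j + s) ` {a..t - h}. g i) \<le> (\<Sum>i\<le>t. g i)"
      using g by (intro sum_mono2) auto
    then show "(\<Sum>j\<in>{a..t - h}. g (j + s)) \<le> (\<Sum>i\<le>t. g i)"
      by (subst (asm) sum.reindex) (auto simp: inj_on_def)
  qed
  also have "\<dots> = real (h + 1) * (\<Sum>i\<le>t. g i)" by simp
  finally show ?thesis .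
qed

text \<open>For j >= N/2 the binomial coefficient is of order N^(k-1); summing the window bound over
  j in [N/2, t - h] and then over the N/4 largest t <= N gains the remaining factor N^2.\<close>

lemma sum_partial_sums_lower_bound:
  fixes g :: "nat \<Rightarrow> real"
  assumes g: "\<And>i. g i \<ge> 0" and c: "c > 0" and k: "k \<ge> 1"
    and window: "\<And>j. real (j choose (k - 1)) \<le> c * sqrt (\<Sum>s\<le>h. g (j + s))"
    and N: "8 * h \<le> N" "2 * k \<le> N"
  shows "real N ^ (2 * k) \<le> 32 * (2 * real k) ^ (2 * k - 2) * c\<^sup>2 * real (h + 1) * (\<Sum>t\<le>N. \<Sum>i\<le>t. g i)"
proof -
  define a where "a = (N + 1) div 2"
  define b where "b = (3 * N + 3) div 4"
  define L where "L = (real N / (2 * real k)) ^ (2 * k - 2) / c\<^sup>2"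
  have ab: "N \<le> 2 * a" "2 * a \<le> N + 1" "3 * N \<le> 4 * b" "4 * b \<le> 3 * N + 3"
    unfolding a_def b_def by auto
  have L_le: "L \<le> (\<Sum>s\<le>h. g (j + s))" if "a \<le> j" for j
  proof -
    have "N \<le> 2 * j" using that ab by linarith
    from binomial_pow_le_window[OF g k window N(2) this]
    show ?thesis unfolding L_def using c by (simp add: pos_divide_le_eq mult.commute)
  qed
  have row: "real N / 8 * L \<le> real (h + 1) * (\<Sum>i\<le>t. g i)" if "b \<le> t" for t
  proof -
    have "a + h \<le> t" "N \<le> 8 * card {a..t - h}" using that ab N by auto
    moreover have "L \<ge> 0" unfolding L_def by simp
    ultimately have "real N / 8 * L \<le> real (card {a..t - h}) * L"
      by (intro mult_right_mono) auto
    also have "\<dots> \<le> real (h + 1) * (\<Sum>i\<le>t. g i)"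
      using card_mult_le_window_sum[OF g L_le \<open>a + h \<le> t\<close>] .
    finally show ?thesis .
  qed
  have "real N / 4 * (real N / 8 * L) \<le> real (card {b..N}) * (real N / 8 * L)"
    using ab unfolding L_def by (intro mult_right_mono) auto
  also have "\<dots> = (\<Sum>t\<in>{b..N}. real N / 8 * L)" by simp
  also have "\<dots> \<le> (\<Sum>t\<in>{b..N}. real (h + 1) * (\<Sum>i\<le>t. g i))"
    using row by (intro sum_mono) auto
  also have "\<dots> \<le> (\<Sum>t\<le>N. real (h + 1) * (\<Sum>i\<le>t. g i))"
    using g by (intro sum_mono2) (auto intro!: mult_nonneg_nonneg sum_nonneg)
  also have "\<dots> = real (h + 1) * (\<Sum>t\<le>N. \<Sum>i\<le>t. g i)" by (simp add: sum_distrib_left)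
  finally have bound: "real N ^ 2 * L \<le> 32 * real (h + 1) * (\<Sum>t\<le>N. \<Sum>i\<le>t. g i)"
    by (simp add: power2_eq_square algebra_simps)
  have "2 + (2 * k - 2) = 2 * k" using k by simp
  then have "real N ^ 2 * real N ^ (2 * k - 2) = real N ^ (2 * k)" by (metis power_add)
  then have "real N ^ (2 * k) = (2 * real k) ^ (2 * k - 2) * c\<^sup>2 * (real N ^ 2 * L)"
    unfolding L_def using c k by (simp add: power_divide)
  also have "\<dots> \<le> (2 * real k) ^ (2 * k - 2) * c\<^sup>2 * (32 * real (h + 1) * (\<Sum>t\<le>N. \<Sum>i\<le>t. g i))"
    by (rule mult_left_mono[OF bound]) simp
  finally show ?thesis by (simp only: mult_ac)
qed

lemma gramian_term_diag:
  assumes A: "A \<in> carrier_mat n n" and B: "B \<in> carrier_mat n m" and C: "C \<in> carrier_mat p n"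
    and i: "i < p"
  shows "(C * A ^\<^sub>m j * B * transpose_mat B * transpose_mat (A ^\<^sub>m j) * transpose_mat C) $$ (i, i)
     = (\<Sum>l<m. (markov_param A B C j $$ (i, l))\<^sup>2)"
proof -
  define F where "F = markov_param A B C j"
  have Aj: "A ^\<^sub>m j \<in> carrier_mat n n" using A by simp
  have CA: "C * A ^\<^sub>m j \<in> carrier_mat p n" using Aj C by simp
  have F: "F \<in> carrier_mat p m" unfolding F_def markov_param_def using CA B by simp
  have tF: "transpose_mat F = transpose_mat B * (transpose_mat (A ^\<^sub>m j) * transpose_mat C)"
    unfolding F_def markov_param_def using transpose_mult[OF CA B] transpose_mult[OF C Aj] by simp
  have "C * A ^\<^sub>m j * B * transpose_mat B * transpose_mat (A ^\<^sub>m j) * transpose_mat C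
      = F * transpose_mat B * transpose_mat (A ^\<^sub>m j) * transpose_mat C"
    unfolding F_def markov_param_def ..
  also have "\<dots> = F * transpose_mat F"
    unfolding tF using F B Aj C by (simp add: assoc_mult_mat[of _ p m _ n _ p] assoc_mult_mat[of _ p n _ n _ p])
  finally show ?thesis
    using F i by (simp add: F_def scalar_prod_def lessThan_atLeast0 power2_eq_square)
qed

lemma sum_atMost_rev: "(\<Sum>s\<le>t. f (t - s)) = (\<Sum>i\<le>(t::nat). f i)"
  by (rule sum.reindex_bij_witness[where i="\<lambda>i. t - i" and j="\<lambda>i. t - i"]) auto

lemma trace_mat_sum_G_mat:
  assumes A: "A \<in> carrier_mat n n" and B: "B \<in> carrier_mat n m" and C: "C \<in> carrier_mat p n"
  shows "(\<Sum>i<p. mat_sum p p (G_mat A B C) {0..N} $$ (i, i))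
       = (\<Sum>t\<le>N. \<Sum>i\<le>t. frobenius_sq (markov_param A B C i))"
proof -
  have "(\<Sum>i<p. mat_sum p p (G_mat A B C) {0..N} $$ (i, i))
      = (\<Sum>i<p. \<Sum>t\<le>N. \<Sum>s\<le>t. \<Sum>l<m. (markov_param A B C (t - s) $$ (i, l))\<^sup>2)"
    using C gramian_term_diag[OF A B C]
    by (intro sum.cong refl) (simp add: mat_sum_def G_mat_def atLeast0AtMost)
  also have "\<dots> = (\<Sum>t\<le>N. \<Sum>s\<le>t. frobenius_sq (markov_param A B C (t - s)))"
    using B C by (simp add: frobenius_sq_def markov_param_def sum.swap[of _ "{..<p}"])
  also have "\<dots> = (\<Sum>t\<le>N. \<Sum>i\<le>t. frobenius_sq (markov_param A B C i))"
    by (rule sum.cong[OF refl], rule sum_atMost_rev)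
  finally show ?thesis .
qed

lemma sum_sq_le_sq_sum_abs:
  fixes f :: "'a \<Rightarrow> real"
  assumes "finite I"
  shows "(\<Sum>i\<in>I. (f i)\<^sup>2) \<le> (\<Sum>i\<in>I. \<bar>f i\<bar>)\<^sup>2"
  using assms
proof (induct I rule: finite_induct)
  case (insert x I)
  define S where "S = (\<Sum>i\<in>I. \<bar>f i\<bar>)"
  have "0 \<le> 2 * \<bar>f x\<bar> * S" unfolding S_def by (intro mult_nonneg_nonneg sum_nonneg) auto
  have "(\<Sum>i\<in>insert x I. (f i)\<^sup>2) \<le> (f x)\<^sup>2 + S\<^sup>2" using insert unfolding S_def by simp
  also have "\<dots> \<le> (\<bar>f x\<bar> + S)\<^sup>2" using \<open>0 \<le> 2 * \<bar>f x\<bar> * S\<close> by (simp add: power2_sum)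
  also have "\<bar>f x\<bar> + S = (\<Sum>i\<in>insert x I. \<bar>f i\<bar>)" using insert unfolding S_def by simp
  finally show ?case .
qed simp

lemma vnorm2_le_sum_abs: "vnorm2 x \<le> (\<Sum>i<dim_vec x. \<bar>x $ i\<bar>)"
proof -
  have "vnorm2 x \<le> sqrt ((\<Sum>i<dim_vec x. \<bar>x $ i\<bar>)\<^sup>2)"
    unfolding vnorm2_def by (intro real_sqrt_le_mono sum_sq_le_sq_sum_abs) simp
  also have "\<dots> = (\<Sum>i<dim_vec x. \<bar>x $ i\<bar>)" by (simp add: sum_nonneg)
  finally show ?thesis .
qed

lemma abs_index_le_vnorm2:
  assumes "i < dim_vec x"
  shows "\<bar>x $ i\<bar> \<le> vnorm2 x"
proof -
  have "(x $ i)\<^sup>2 \<le> (\<Sum>i<dim_vec x. (x $ i)\<^sup>2)" using assms by (intro member_le_sum) auto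
  then show ?thesis unfolding vnorm2_def by (metis real_sqrt_abs real_sqrt_le_mono)
qed

lemma vnorm2_unit_vec:
  assumes "i < n"
  shows "vnorm2 (unit_vec n i :: real vec) = 1"
proof -
  have "(\<Sum>j<n. ((unit_vec n i :: real vec) $ j)\<^sup>2) = (\<Sum>j<n. if j = i then 1 else 0)"
    using assms by (intro sum.cong) auto
  then show ?thesis unfolding vnorm2_def using assms by simp
qed

lemma bdd_above_op_norm:
  fixes M :: "real mat"
  shows "bdd_above {vnorm2 (M *\<^sub>v x) | x. x \<in> carrier_vec (dim_col M) \<and> vnorm2 x \<le> 1}"
proof (rule bdd_aboveI, clarify)
  fix x :: "real vec" assume x: "x \<in> carrier_vec (dim_col M)" and nx: "vnorm2 x \<le> 1"
  have "\<bar>(M *\<^sub>v x) $ i\<bar> \<le> (\<Sum>j<dim_col M. \<bar>M $$ (i, j)\<bar>)" if i: "i < dim_row M" for i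
  proof -
    have "\<bar>(M *\<^sub>v x) $ i\<bar> \<le> (\<Sum>j<dim_col M. \<bar>M $$ (i, j)\<bar> * \<bar>x $ j\<bar>)"
      using i x by (simp add: scalar_prod_def lessThan_atLeast0 abs_mult[symmetric] sum_abs)
    also have "\<dots> \<le> (\<Sum>j<dim_col M. \<bar>M $$ (i, j)\<bar>)"
      using abs_index_le_vnorm2[of _ x] x nx by (intro sum_mono mult_left_le) force+
    finally show ?thesis .
  qed
  then have "(\<Sum>i<dim_row M. \<bar>(M *\<^sub>v x) $ i\<bar>) \<le> (\<Sum>i<dim_row M. \<Sum>j<dim_col M. \<bar>M $$ (i, j)\<bar>)"
    by (intro sum_mono) auto
  then show "vnorm2 (M *\<^sub>v x) \<le> (\<Sum>i<dim_row M. \<Sum>j<dim_col M. \<bar>M $$ (i, j)\<bar>)"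
    using vnorm2_le_sum_abs[of "M *\<^sub>v x"] by simp
qed

lemma diag_le_op_norm:
  fixes M :: "real mat"
  assumes M: "M \<in> carrier_mat p p" and i: "i < p"
  shows "M $$ (i, i) \<le> op_norm M"
proof -
  have "(M *\<^sub>v unit_vec p i) $ i = M $$ (i, i)"
    using M i by (simp add: scalar_prod_def lessThan_atLeast0 if_distrib[of "\<lambda>c. _ * c"] cong: if_cong)
  then have "M $$ (i, i) \<le> vnorm2 (M *\<^sub>v unit_vec p i)"
    using abs_index_le_vnorm2[of i "M *\<^sub>v unit_vec p i"] M i by auto
  also have "\<dots> \<le> op_norm M"
    unfolding op_norm_def using M i vnorm2_unit_vec[OF i]
    by (intro cSup_upper[OF _ bdd_above_op_norm]) auto
  finally show ?thesis .
qed

lemma trace_gramian_sum_lower_bound: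
  fixes n_as :: "(nat \<times> complex) list"
  assumes A: "A \<in> carrier_mat n n" and B: "B \<in> carrier_mat n m" and C: "C \<in> carrier_mat p n"
    and jnf: "jordan_nf (map_mat complex_of_real A) n_as"
    and blk: "(k, \<mu>) \<in> set n_as" and lam: "cmod \<mu> = 1"
    and ctrb: "vec_space.rank n (ctrb_mat n A B) = n"
    and obsv: "vec_space.rank n (obsv_mat n A C) = n"
  shows "\<exists>D>0. \<forall>N. max (20 * n\<^sup>2) (2 * k) \<le> N \<longrightarrow>
    real N ^ (2 * k) \<le> D * (\<Sum>i<p. mat_sum p p (G_mat A B C) {0..N} $$ (i, i))"
proof -
  have "map_mat complex_of_real A \<in> carrier_mat n n" using A by simp
  from jordan_nf_block_size[OF jnf this blk] have k: "k \<ge> 1" and "n \<ge> 1" by auto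
  then have n_sq: "16 * n \<le> 20 * n\<^sup>2" by (simp add: power2_eq_square)
  obtain c where c: "c > 0" and window: "\<And>j. real (j choose (k - 1)) \<le> c * sqrt (markov_window n A B C j)"
    using binomial_le_markov_window[OF A B C jnf blk lam ctrb obsv] by blast
  define D where "D = 32 * (2 * real k) ^ (2 * k - 2) * c\<^sup>2 * real (2 * n + 1)"
  have "real N ^ (2 * k) \<le> D * (\<Sum>i<p. mat_sum p p (G_mat A B C) {0..N} $$ (i, i))"
    if N: "max (20 * n\<^sup>2) (2 * k) \<le> N" for N
  proof -
    have "8 * (2 * n) \<le> N" "2 * k \<le> N" using N n_sq by auto
    then show ?thesis
      unfolding D_def trace_mat_sum_G_mat[OF A B C]
      by (rule sum_partial_sums_lower_bound[where g = "\<lambda>i. frobenius_sq (markov_param A B C i)",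
          OF frobenius_sq_nonneg c k window[unfolded markov_window_def]])
  qed
  moreover have "D > 0" unfolding D_def using c k by simp
  ultimately show ?thesis by blast
qed

lemma op_norm_gramian_sum_lower_bound:
  fixes n_as :: "(nat \<times> complex) list"
  assumes A: "A \<in> carrier_mat n n" and B: "B \<in> carrier_mat n m" and C: "C \<in> carrier_mat p n"
    and jnf: "jordan_nf (map_mat complex_of_real A) n_as"
    and blk: "(k, \<mu>) \<in> set n_as" and lam: "cmod \<mu> = 1"
    and ctrb: "vec_space.rank n (ctrb_mat n A B) = n"
    and obsv: "vec_space.rank n (obsv_mat n A C) = n"
  shows "\<exists>D>0. \<forall>N. max (20 * n\<^sup>2) (2 * k) \<le> N \<longrightarrow>
    real N ^ (2 * k) \<le> D * op_norm (mat_sum p p (G_mat A B C) {0..N})"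
proof -
  let ?M = "\<lambda>N. mat_sum p p (G_mat A B C) {0..N}"
  obtain D where D: "D > 0" and trace: "\<And>N. max (20 * n\<^sup>2) (2 * k) \<le> N \<Longrightarrow>
      real N ^ (2 * k) \<le> D * (\<Sum>i<p. ?M N $$ (i, i))"
    using trace_gramian_sum_lower_bound[OF A B C jnf blk lam ctrb obsv] by blast
  have bound: "real N ^ (2 * k) \<le> D * real p * op_norm (?M N)"
    if N: "max (20 * n\<^sup>2) (2 * k) \<le> N" for N
  proof -
    have "(\<Sum>i<p. ?M N $$ (i, i)) \<le> (\<Sum>i<p. op_norm (?M N))"
      by (intro sum_mono diag_le_op_norm) (auto simp: mat_sum_def)
    then have "D * (\<Sum>i<p. ?M N $$ (i, i)) \<le> D * real p * op_norm (?M N)"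
      using D by (simp add: mult_left_mono)
    with trace[OF N] show ?thesis by linarith
  qed
  have "map_mat complex_of_real A \<in> carrier_mat n n" using A by simp
  from jordan_nf_block_size(1)[OF jnf this blk]
  have pos: "0 < real (max (20 * n\<^sup>2) (2 * k)) ^ (2 * k)" by simp
  have "p \<noteq> 0"
  proof
    assume "p = 0"
    with bound[OF order_refl] pos show False by simp
  qed
  with D have "D * real p > 0" by simp
  with bound show ?thesis by blast
qed

theorem lemma2:
  fixes A B C :: "real mat" and n m p k :: nat and \<mu> :: complex and n_as :: "(nat \<times> complex) list"
  assumes A: "A \<in> carrier_mat n n" and B: "B \<in> carrier_mat n m" and C: "C \<in> carrier_mat p n"
    and jnf: "jordan_nf (map_mat complex_of_real A) n_as"
    and blk: "(k, \<mu>) \<in> set n_as" and lam: "cmod \<mu> = 1"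
    and ctrb: "vec_space.rank n (ctrb_mat n A B) = n"
    and obsv: "vec_space.rank n (obsv_mat n A C) = n"
  shows "\<exists>K > 0. \<forall>N::nat. N \<ge> max (20 * n^2) (2 * k) \<longrightarrow>
           sqrt (op_norm (mat_sum p p (G_mat A B C) {0..N})) \<ge> K * real N ^ k"
proof -
  obtain D where D: "D > 0" and bound: "\<And>N. max (20 * n\<^sup>2) (2 * k) \<le> N \<Longrightarrow>
      real N ^ (2 * k) \<le> D * op_norm (mat_sum p p (G_mat A B C) {0..N})"
    using op_norm_gramian_sum_lower_bound[OF A B C jnf blk lam ctrb obsv] by blast
  show ?thesis
  proof (intro exI[of _ "1 / sqrt D"] conjI allI impI)
    fix N assume "max (20 * n\<^sup>2) (2 * k) \<le> N"
    then have "sqrt (real N ^ (2 * k) / D) \<le> sqrt (op_norm (mat_sum p p (G_mat A B C) {0..N}))"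
      using bound D by (simp add: pos_divide_le_eq mult.commute)
    moreover have "sqrt (real N ^ (2 * k)) = real N ^ k"
      unfolding mult.commute[of 2 k] power_mult by simp
    ultimately show "1 / sqrt D * real N ^ k \<le> sqrt (op_norm (mat_sum p p (G_mat A B C) {0..N}))"
      by (simp add: real_sqrt_divide)
  qed (use D in simp)
qed

end
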